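(* Let $f:\{-1,1\}^n\to\{-1,1\}$ be a boolean function, let $V_1\subsetneq[n]$, $k\in[n]\setminus V_1$, $V_2=V_1\cup\{k\}$, and $\epsilon\in(0,\tfrac12)$. Then $$M_{V_2,\epsilon}(f)-M_{V_1,\epsilon}(f)\ge -I_k(f)\Big(3\epsilon+2\epsilon^2+\Big(\frac{I_k(f)}{4}\Big)^{-\epsilon}-1\Big),$$ where the right-hand side is interpreted as $0$ when $I_k(f)=0$.
   Context: Let $x$ be uniform on $\{-1,1\}^n$; $\mu_k$ flips the $k$-th coordinate; $I_k(f)=\mathbb{P}_x[f(x)\neq f(\mu_k(x))]$. For $J\subseteq[n]$ and $x\in\{-1,1\}^n$, the restriction $f_{J^c\to x}:\{-1,1\}^J\to\{-1,1\}$ is $f_{J^c\to x}(y)=f(z)$ with $z_i=y_i$ for $i\in J$ and $z_i=x_i$ for $i\notin J$; its Fourier coefficients are $\widehat{f_{J^c\to x}}(S)=\mathbb{E}_y[f_{J^c\to x}(y)\prod_{i\in S}y_i]$ for $S\subseteq J$, $y$ uniform on $\{-1,1\}^J$. For $V\subseteq[n]$ and $\epsilon\in[0,\tfrac12)$, the $\epsilon$-moment of $V^c$-restricted Fourier coefficients is $M_{V,\epsilon}(f)=\mathbb{E}_x\sum_{S\subseteq V}|\widehat{f_{V^c\to x}}(S)|^{2(1+\epsilon)}$; for $V=\emptyset$ this equals $\mathbb{E}_x|f(x)|^{2(1+\epsilon)}=1$. *)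

theory Defs
  imports Complex_Main
begin

text \<open>Points of the cube over a coordinate set J: functions nat => real taking values
in {-1,1} on J and the canonical value 1 outside J. The cube {-1,1}^n is the cube
over [n] = {0..<n} (coordinates are 0-indexed).\<close>

definition cube_on :: "nat set \<Rightarrow> (nat \<Rightarrow> real) set" where
  "cube_on J = {x. (\<forall>i\<in>J. x i = -1 \<or> x i = 1) \<and> (\<forall>i. i \<notin> J \<longrightarrow> x i = 1)}"

abbreviation cube :: "nat \<Rightarrow> (nat \<Rightarrow> real) set" where
  "cube n \<equiv> cube_on {0..<n}"

definition is_boolean_fun :: "nat \<Rightarrow> ((nat \<Rightarrow> real) \<Rightarrow> real) \<Rightarrow> bool" where
  "is_boolean_fun n f \<longleftrightarrow> (\<forall>x\<in>cube n. f x = -1 \<or> f x = 1)"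

definition flip :: "nat \<Rightarrow> (nat \<Rightarrow> real) \<Rightarrow> (nat \<Rightarrow> real)" where
  "flip k x = x(k := - x k)"

definition influence :: "nat \<Rightarrow> ((nat \<Rightarrow> real) \<Rightarrow> real) \<Rightarrow> nat \<Rightarrow> real" where
  "influence n f k = real (card {x \<in> cube n. f x \<noteq> f (flip k x)}) / 2 ^ n"

definition restrict_fun ::
  "((nat \<Rightarrow> real) \<Rightarrow> real) \<Rightarrow> nat set \<Rightarrow> (nat \<Rightarrow> real) \<Rightarrow> (nat \<Rightarrow> real) \<Rightarrow> real" where
  "restrict_fun f J x y = f (\<lambda>i. if i \<in> J then y i else x i)"

definition restr_fourier ::
  "((nat \<Rightarrow> real) \<Rightarrow> real) \<Rightarrow> nat set \<Rightarrow> (nat \<Rightarrow> real) \<Rightarrow> nat set \<Rightarrow> real" where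
  "restr_fourier f J x S =
     (\<Sum>y\<in>cube_on J. restrict_fun f J x y * (\<Prod>i\<in>S. y i)) / 2 ^ card J"

definition moment :: "nat \<Rightarrow> nat set \<Rightarrow> real \<Rightarrow> ((nat \<Rightarrow> real) \<Rightarrow> real) \<Rightarrow> real" where
  "moment n V \<epsilon> f =
     (\<Sum>x\<in>cube n. \<Sum>S\<in>Pow V. \<bar>restr_fourier f V x S\<bar> powr (2 * (1 + \<epsilon>))) / 2 ^ n"

end

theory Submission
  imports Defs "HOL-Analysis.Convex"
begin

text \<open>
  Fix \<open>x\<close> and \<open>S \<subseteq> V\<^sub>1\<close>, and let \<open>u\<close>, \<open>v\<close> be the \<open>V\<^sub>2\<close>-restricted coefficients of \<open>f\<close>
  at \<open>S\<close> and \<open>S \<union> {k}\<close>. Then the \<open>V\<^sub>1\<close>-restricted coefficients at \<open>S\<close> of the two points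
  obtained by setting \<open>x\<^sub>k = \<plusminus>1\<close> are \<open>u \<plusminus> v\<close>, so with \<open>p = 2(1 + \<epsilon>)\<close> the moment
  difference is minus the average of \<open>(|u+v|\<^sup>p + |u-v|\<^sup>p)/2 - |u|\<^sup>p - |v|\<^sup>p\<close>.
  A second order Taylor bound together with concavity of \<open>t\<^sup>\<epsilon>\<close> bounds this defect by
  \<open>(1+\<epsilon>)(1+2\<epsilon>) v\<^sup>2 (u\<^sup>2+v\<^sup>2)\<^sup>\<epsilon> - |v|\<^sup>p\<close>, and Young's inequality with weight
  \<open>c = I\<^sub>k(f)\<close> makes the bound quadratic in \<open>u, v\<close>. By Parseval the total weight of the
  \<open>v\<^sup>2\<close> is \<open>I\<^sub>k(f)\<close> (they are the coefficients of the discrete derivative in direction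
  \<open>k\<close>) and that of \<open>u\<^sup>2 + v\<^sup>2\<close> is \<open>E f\<^sup>2 = 1\<close>.
\<close>

section \<open>The parallelogram defect of \<open>|t|\<^sup>p\<close>\<close>

lemma powr_le_linear:
  fixes x e :: real
  assumes "x \<ge> 0" "0 < e" "e < 1"
  shows "x powr e \<le> e * x + (1 - e)"
  using Youngs_inequality_0[of e "1-e" x 1] assms by (cases "x = 0") auto

lemma powr_add_le_midpoint:
  fixes a b e :: real
  assumes "a \<ge> 0" "b \<ge> 0" "0 < e" "e < 1"
  shows "a powr e + b powr e \<le> 2 * ((a + b) / 2) powr e"
proof (cases "a + b = 0")
  case True
  then have "a = 0" "b = 0" using assms by auto
  then show ?thesis using assms by simp
next
  case False
  define m where "m = (a + b) / 2"
  have m: "m > 0" using False assms unfolding m_def by auto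
  have "(a/m) powr e + (b/m) powr e \<le> e * ((a + b) / m) + 2 * (1 - e)"
    using powr_le_linear[of "a/m" e] powr_le_linear[of "b/m" e] assms m
    by (simp add: add_divide_distrib algebra_simps)
  also have "\<dots> = 2" using m by (simp add: m_def field_simps)
  finally have "(a powr e + b powr e) / m powr e \<le> 2"
    using assms m by (simp add: powr_divide add_divide_distrib)
  then show ?thesis
    using m by (simp add: divide_le_eq m_def[symmetric])
qed

lemma powr_square_shift_le:
  fixes u v s e :: real
  assumes "0 < e" "e < 1" "\<bar>s\<bar> \<le> 1"
  shows "((u + s*v)^2) powr e + ((u - s*v)^2) powr e \<le> 2 * (u^2 + v^2) powr e"
proof -
  have "((u + s*v)^2) powr e + ((u - s*v)^2) powr e \<le> 2 * (((u + s*v)^2 + (u - s*v)^2) / 2) powr e"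
    using powr_add_le_midpoint assms by simp
  also have "((u + s*v)^2 + (u - s*v)^2) / 2 = u^2 + s^2 * v^2"
    by (simp add: power2_eq_square algebra_simps)
  also have "(u^2 + s^2 * v^2) powr e \<le> (u^2 + v^2) powr e"
    using assms by (intro powr_mono2) (auto simp: abs_square_le_1 mult_left_le_one_le)
  finally show ?thesis by simp
qed

lemma DERIV_mult_powr_square:
  fixes e :: real
  assumes "e > 0"
  shows "((\<lambda>t. t * (t^2) powr e) has_real_derivative (1 + 2*e) * (t^2) powr e) (at t)"
proof (cases "t = 0")
  case True
  have "isCont (\<lambda>z::real. (z^2) powr e) 0"
    unfolding isCont_def using assms by (intro tendsto_intros) auto
  moreover have "z * (z^2) powr e - 0 * (0^2) powr e = (z^2) powr e * (z - 0)" for z :: real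
    by simp
  ultimately show ?thesis
    using True assms unfolding CARAT_DERIV by (intro exI[of _ "\<lambda>z. (z^2) powr e"]) auto
next
  case False
  then have pos: "t^2 > 0" by simp
  have "t^2 * (t^2) powr (e - 1) = (t^2) powr e"
    using pos by (simp add: powr_diff)
  then have "1 * (t^2) powr e + t * (e * (t^2) powr (e - 1) * (2*t)) = (1 + 2*e) * (t^2) powr e"
    by (simp add: power2_eq_square algebra_simps)
  moreover have "((\<lambda>t. t * (t^2) powr e) has_real_derivative
      1 * (t^2) powr e + t * (e * (t^2) powr (e - 1) * (2*t))) (at t)"
    by (intro derivative_eq_intros DERIV_fun_powr[where r=e] pos) auto
  ultimately show ?thesis by simp
qed

lemma DERIV_square_mult_powr_square:
  fixes e :: real
  assumes "e > 0"
  shows "((\<lambda>t. t^2 * (t^2) powr e) has_real_derivative 2 * (1 + e) * (t * (t^2) powr e)) (at t)"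
proof -
  have "((\<lambda>t. t * (t * (t^2) powr e)) has_real_derivative
      t * ((1 + 2*e) * (t^2) powr e) + 1 * (t * (t^2) powr e)) (at t)"
    by (rule DERIV_mult'[OF DERIV_ident DERIV_mult_powr_square[OF assms]])
  then show ?thesis by (simp add: power2_eq_square algebra_simps)
qed

lemma second_order_upper_bound:
  fixes g g' g'' :: "real \<Rightarrow> real"
  assumes "\<And>t. (g has_real_derivative g' t) (at t)"
    and "\<And>t. (g' has_real_derivative g'' t) (at t)"
    and "\<And>t. 0 \<le> t \<Longrightarrow> t \<le> 1 \<Longrightarrow> g'' t \<le> c"
  shows "g 1 \<le> g 0 + g' 0 + c / 2"
proof -
  define diff where "diff m = (if m = 0 then g else if m = 1 then g' else g'')" for m :: nat
  have "\<forall>m t. m < 2 \<and> 0 \<le> t \<and> t \<le> 1 \<longrightarrow> (diff m has_real_derivative diff (Suc m) t) (at t)"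
    using assms(1,2) by (auto simp: diff_def less_2_cases_iff)
  then obtain t where t: "0 < t" "t < 1" and "g 1 = (\<Sum>m<2. diff m 0 / fact m) + diff 2 t / fact 2"
    using Maclaurin[of 1 2 diff g] by (auto simp: diff_def)
  then have "g 1 = g 0 + g' 0 + g'' t / 2"
    by (simp add: diff_def eval_nat_numeral)
  then show ?thesis using assms(3)[of t] t by simp
qed

lemma abs_powr_eq_square_mult_powr:
  fixes t e :: real
  shows "\<bar>t\<bar> powr (2 * (1 + e)) = t^2 * (t^2) powr e"
proof (cases "t = 0")
  case False
  have "\<bar>t\<bar> powr (2 * (1 + e)) = \<bar>t\<bar> powr (2 + 2 * e)"
    by (simp add: algebra_simps)
  also have "\<dots> = \<bar>t\<bar> powr 2 * \<bar>t\<bar> powr (2 * e)"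
    by (rule powr_add)
  also have "\<bar>t\<bar> powr (2 * e) = (\<bar>t\<bar> powr 2) powr e"
    by (metis powr_powr)
  finally show ?thesis by simp
qed simp

lemma symmetric_second_difference_le:
  fixes u v e :: real
  assumes e: "0 < e" "e < 1"
  defines "H \<equiv> \<lambda>t::real. t^2 * (t^2) powr e"
  shows "(H (u + v) + H (u - v)) / 2 - H u \<le> (1 + e) * (1 + 2*e) * v^2 * (u^2 + v^2) powr e"
proof -
  define H1 where "H1 t = t * (t^2) powr e" for t :: real
  define E where "E t = (t^2) powr e" for t :: real
  define Y where "Y = (u^2 + v^2) powr e"
  define P where "P = (1 + e) * (1 + 2*e)"
  define g where "g s = (H (u + s*v) + H (u - s*v)) / 2" for s
  define g' where "g' s = (1 + e) * v * (H1 (u + s*v) - H1 (u - s*v))" for s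
  define g'' where "g'' s = P * v^2 * (E (u + s*v) + E (u - s*v))" for s
  have dH: "(H has_real_derivative 2 * (1 + e) * H1 t) (at t)" for t
    unfolding H_def H1_def by (rule DERIV_square_mult_powr_square[OF e(1)])
  have dH1: "(H1 has_real_derivative (1 + 2*e) * E t) (at t)" for t
    unfolding H1_def E_def by (rule DERIV_mult_powr_square[OF e(1)])
  have "(g has_real_derivative g' s) (at s)" for s
  proof -
    have "(g has_real_derivative (2 * (1 + e) * H1 (u + s*v) * v + 2 * (1 + e) * H1 (u - s*v) * (- v)) / 2) (at s)"
      unfolding g_def
      by (intro DERIV_cdivide DERIV_add DERIV_chain2[OF dH]) (auto intro!: derivative_eq_intros)
    moreover have "(2 * (1 + e) * H1 (u + s*v) * v + 2 * (1 + e) * H1 (u - s*v) * (- v)) / 2 = g' s"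
      by (simp add: g'_def field_simps)
    ultimately show ?thesis by simp
  qed
  moreover have "(g' has_real_derivative g'' s) (at s)" for s
  proof -
    have "(g' has_real_derivative (1 + e) * v * ((1 + 2*e) * E (u + s*v) * v - (1 + 2*e) * E (u - s*v) * (- v))) (at s)"
      unfolding g'_def
      by (intro DERIV_cmult DERIV_diff DERIV_chain2[OF dH1]) (auto intro!: derivative_eq_intros)
    then show ?thesis by (simp add: g''_def P_def power2_eq_square algebra_simps)
  qed
  moreover have "g'' s \<le> 2 * P * v^2 * Y" if "0 \<le> s" "s \<le> 1" for s
  proof -
    have "P \<ge> 0" using e by (simp add: P_def)
    moreover have "E (u + s*v) + E (u - s*v) \<le> 2 * Y"
      unfolding E_def Y_def using powr_square_shift_le[OF e] that by simp
    ultimately have "P * v^2 * (E (u + s*v) + E (u - s*v)) \<le> P * v^2 * (2 * Y)"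
      by (intro mult_left_mono) auto
    then show ?thesis unfolding g''_def by simp
  qed
  ultimately have "g 1 \<le> g 0 + g' 0 + 2 * P * v^2 * Y / 2"
    by (rule second_order_upper_bound)
  then show ?thesis by (simp add: g_def g'_def Y_def P_def field_simps)
qed

lemma Youngs_inequality_scaled:
  fixes a b c e :: real
  assumes "a \<ge> 0" "b > 0" "c > 0" "0 < e" "e < 1"
  shows "a powr (1 - e) * b powr e \<le> (1 - e) * c powr (- e) * a + e * c powr (1 - e) * b"
proof (cases "a = 0")
  case False
  have "a powr (1 - e) * b powr e = c powr (1 - e) * ((a / c) powr (1 - e) * b powr e)"
    using assms False by (simp add: powr_divide)
  also have "\<dots> \<le> c powr (1 - e) * ((1 - e) * (a / c) + e * b)"
    using Youngs_inequality_0[of "1 - e" e "a / c" b] assms False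
    by (intro mult_left_mono) auto
  also have "\<dots> = (1 - e) * (c powr (1 - e) * (a / c)) + e * c powr (1 - e) * b"
    by (simp add: algebra_simps)
  also have "c powr (1 - e) * (a / c) = c powr (- e) * a"
    using powr_add[of c 1 "- e"] assms by simp
  finally show ?thesis by (simp add: mult.assoc)
qed (use assms in simp)

definition parallelogram_defect :: "real \<Rightarrow> real \<Rightarrow> real \<Rightarrow> real" where
  "parallelogram_defect p u v =
     (\<bar>u + v\<bar> powr p + \<bar>u - v\<bar> powr p) / 2 - \<bar>u\<bar> powr p - \<bar>v\<bar> powr p"

lemma parallelogram_defect_le:
  fixes u v c e :: real
  assumes e: "0 < e" "e < 1" and c: "c > 0" and uv: "u^2 + v^2 \<le> 1"
  shows "parallelogram_defect (2 * (1 + e)) u v \<le>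
           ((1 + e) * (1 + 2*e) - 2 + (1 - e) * c powr (- e)) * v^2 + e * c powr (1 - e) * (u^2 + v^2)"
proof (cases "v = 0")
  case True
  then show ?thesis using e c by (simp add: parallelogram_defect_def)
next
  case False
  define P where "P = (1 + e) * (1 + 2*e)"
  define Y where "Y = (u^2 + v^2) powr e"
  define Z where "Z = (v^2) powr e"
  have v2: "v^2 > 0" using False by simp
  have Z: "Z > 0" using v2 by (simp add: Z_def)
  have ZY: "Z \<le> Y" unfolding Z_def Y_def using e by (intro powr_mono2) auto
  have Y1: "Y \<le> 1" unfolding Y_def using powr_mono2[of e "u^2 + v^2" 1] uv e by simp
  have P1: "P \<ge> 1" unfolding P_def using e mult_pos_pos[of e e] by (simp add: algebra_simps)
  have "parallelogram_defect (2 * (1 + e)) u v \<le> P * v^2 * Y - v^2 * Z"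
    using symmetric_second_difference_le[OF e, of u v]
    unfolding parallelogram_defect_def abs_powr_eq_square_mult_powr P_def Y_def Z_def by simp
  also have "\<dots> \<le> (P - 2) * v^2 + v^2 * Y / Z"
  proof -
    have "(P - 1) * (1 - Y) \<ge> 0" "(Y - Z) * (1 - Z) / Z \<ge> 0"
      using P1 Y1 ZY Z by simp_all
    moreover have "P - 2 + Y / Z - (P * Y - Z) = (P - 1) * (1 - Y) + (Y - Z) * (1 - Z) / Z"
      using Z by (simp add: field_simps)
    ultimately have "v^2 * (P * Y - Z) \<le> v^2 * (P - 2 + Y / Z)"
      using v2 by (intro mult_left_mono) auto
    then show ?thesis by (simp add: algebra_simps)
  qed
  also have "v^2 * Y / Z = (v^2) powr (1 - e) * (u^2 + v^2) powr e"
    using v2 by (simp add: Z_def Y_def powr_diff)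
  also have "\<dots> \<le> (1 - e) * c powr (- e) * v^2 + e * c powr (1 - e) * (u^2 + v^2)"
    using Youngs_inequality_scaled[of "v^2" "u^2 + v^2" c e] v2 c e
    by (simp add: add_nonneg_pos)
  finally show ?thesis by (simp add: P_def algebra_simps)
qed

section \<open>Sums over the discrete cube\<close>

lemma cube_on_insert:
  assumes "j \<notin> J"
  shows "cube_on (insert j J) = (\<lambda>y. y(j := 1)) ` cube_on J \<union> (\<lambda>y. y(j := -1)) ` cube_on J"
proof (intro equalityI subsetI)
  fix z assume z: "z \<in> cube_on (insert j J)"
  then have "z(j := 1) \<in> cube_on J" using assms by (auto simp: cube_on_def)
  moreover have "z = (z(j := 1))(j := z j)" and "z j = 1 \<or> z j = -1"
    using z by (auto simp: cube_on_def)
  ultimately show "z \<in> (\<lambda>y. y(j := 1)) ` cube_on J \<union> (\<lambda>y. y(j := -1)) ` cube_on J"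
    by (metis (no_types, lifting) UnCI image_eqI)
next
  fix z assume "z \<in> (\<lambda>y. y(j := 1)) ` cube_on J \<union> (\<lambda>y. y(j := -1)) ` cube_on J"
  then obtain y t where "y \<in> cube_on J" "t = 1 \<or> t = -1" "z = y(j := t)" by blast
  then show "z \<in> cube_on (insert j J)" by (auto simp: cube_on_def)
qed

lemma cube_on_empty: "cube_on {} = {\<lambda>_. 1}"
  by (auto simp: cube_on_def)

lemma finite_cube_on: "finite J \<Longrightarrow> finite (cube_on J)"
  by (induction J rule: finite_induct) (simp_all add: cube_on_empty cube_on_insert)

lemma sum_cube_on_insert:
  assumes "finite J" "j \<notin> J"
  shows "(\<Sum>y\<in>cube_on (insert j J). G y) = (\<Sum>y\<in>cube_on J. G (y(j := 1)) + G (y(j := -1)))"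
proof -
  have inj: "inj_on (\<lambda>y. y(j := t)) (cube_on J)" for t :: real
  proof (rule inj_onI)
    fix y y' assume "y \<in> cube_on J" "y' \<in> cube_on J" "y(j := t) = y'(j := t)"
    moreover from this(1,2) have "y j = 1" "y' j = 1" using assms(2) by (auto simp: cube_on_def)
    ultimately show "y = y'" by (metis fun_upd_triv fun_upd_upd)
  qed
  have "y(j := 1) \<noteq> y'(j := -1)" for y y' :: "nat \<Rightarrow> real"
    by (metis fun_upd_same one_neq_neg_one)
  then have "(\<lambda>y. y(j := 1)) ` cube_on J \<inter> (\<lambda>y. y(j := -1)) ` cube_on J = {}"
    by blast
  then have "(\<Sum>y\<in>cube_on (insert j J). G y)
      = (\<Sum>y\<in>(\<lambda>y. y(j := 1)) ` cube_on J. G y) + (\<Sum>y\<in>(\<lambda>y. y(j := -1)) ` cube_on J. G y)"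
    unfolding cube_on_insert[OF assms(2)] using assms(1)
    by (intro sum.union_disjoint) (auto intro: finite_cube_on)
  also have "\<dots> = (\<Sum>y\<in>cube_on J. G (y(j := 1))) + (\<Sum>y\<in>cube_on J. G (y(j := -1)))"
    using inj by (simp add: sum.reindex)
  finally show ?thesis by (simp add: sum.distrib)
qed

lemma card_cube_on: "finite J \<Longrightarrow> card (cube_on J) = 2 ^ card J"
proof (induction J rule: finite_induct)
  case (insert j J)
  have "real (card (cube_on (insert j J))) = (\<Sum>y\<in>cube_on J. 1 + 1)"
    using sum_cube_on_insert[OF insert(1,2), of "\<lambda>_. 1::real"] by simp
  then have "real (card (cube_on (insert j J))) = real (2 ^ card (insert j J))"
    using insert by simp
  then show ?case by (simp only: of_nat_eq_iff)
qed (simp add: cube_on_empty)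

lemma sum_cube_on_fun_upd_pair:
  assumes "finite J" "j \<in> J"
  shows "(\<Sum>x\<in>cube_on J. K (x(j := 1)) + K (x(j := -1))) = 2 * (\<Sum>x\<in>cube_on J. (K x :: real))"
proof -
  have J: "J = insert j (J - {j})" "finite (J - {j})" "j \<notin> J - {j}" using assms by auto
  have "(\<Sum>x\<in>cube_on J. K (x(j := 1)) + K (x(j := -1)))
      = (\<Sum>y\<in>cube_on (J - {j}). 2 * (K (y(j := 1)) + K (y(j := -1))))"
    by (subst J(1), subst sum_cube_on_insert[OF J(2,3)]) simp
  also have "\<dots> = 2 * (\<Sum>x\<in>cube_on J. K x)"
    by (subst (2) J(1), subst sum_cube_on_insert[OF J(2,3)]) (simp add: sum_distrib_left)
  finally show ?thesis .
qed

lemma fun_upd_in_cube_on: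
  "x \<in> cube_on J \<Longrightarrow> j \<in> J \<Longrightarrow> t = 1 \<or> t = -1 \<Longrightarrow> x(j := t) \<in> cube_on J"
  by (auto simp: cube_on_def)

lemma restriction_in_cube_on:
  "x \<in> cube_on J \<Longrightarrow> y \<in> cube_on V \<Longrightarrow> V \<subseteq> J \<Longrightarrow> (\<lambda>i. if i \<in> V then y i else x i) \<in> cube_on J"
  by (auto simp: cube_on_def)

lemma restrict_fun_insert_fun_upd:
  "j \<notin> V \<Longrightarrow> restrict_fun f (insert j V) x (y(j := t)) = restrict_fun f V (x(j := t)) y"
  unfolding restrict_fun_def by (rule arg_cong[of _ _ f]) auto

lemma sum_restrict_fun:
  assumes "finite J" "finite V" "V \<subseteq> J"
  shows "(\<Sum>x\<in>cube_on J. \<Sum>y\<in>cube_on V. restrict_fun H V x y) = 2 ^ card V * (\<Sum>x\<in>cube_on J. (H x :: real))"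
  using assms(2,3)
proof (induction V arbitrary: H rule: finite_induct)
  case empty
  then show ?case by (simp add: cube_on_empty restrict_fun_def)
next
  case (insert j V)
  define K where "K x = (\<Sum>y\<in>cube_on V. restrict_fun H V x y)" for x
  have "(\<Sum>x\<in>cube_on J. \<Sum>y\<in>cube_on (insert j V). restrict_fun H (insert j V) x y)
      = (\<Sum>x\<in>cube_on J. K (x(j := 1)) + K (x(j := -1)))"
    by (simp add: sum_cube_on_insert[OF insert(1,2)] restrict_fun_insert_fun_upd[OF insert(2)]
        sum.distrib K_def)
  also have "\<dots> = 2 * (\<Sum>x\<in>cube_on J. K x)"
    using insert(4) by (intro sum_cube_on_fun_upd_pair[OF assms(1)]) auto
  also have "(\<Sum>x\<in>cube_on J. K x) = 2 ^ card V * (\<Sum>x\<in>cube_on J. H x)"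
    unfolding K_def using insert by auto
  finally show ?case using insert by simp
qed

lemma sum_Pow_insert:
  assumes "finite J" "j \<notin> J"
  shows "(\<Sum>S\<in>Pow (insert j J). F S) = (\<Sum>S\<in>Pow J. F S + F (insert j S))"
proof -
  have "inj_on (insert j) (Pow J)"
    using assms(2) by (intro inj_onI) (metis Pow_iff insert_ident subsetD)
  moreover have "Pow J \<inter> insert j ` Pow J = {}" using assms(2) by auto
  ultimately show ?thesis
    unfolding Pow_insert using assms(1) by (simp add: sum.union_disjoint sum.reindex sum.distrib)
qed

section \<open>Restricted Fourier coefficients\<close>

definition fourier :: "nat set \<Rightarrow> ((nat \<Rightarrow> real) \<Rightarrow> real) \<Rightarrow> nat set \<Rightarrow> real" where
  "fourier J g S = (\<Sum>y\<in>cube_on J. g y * (\<Prod>i\<in>S. y i)) / 2 ^ card J"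

lemma restr_fourier_eq_fourier: "restr_fourier f J x S = fourier J (restrict_fun f J x) S"
  unfolding restr_fourier_def fourier_def ..

lemma fourier_add_scaled: "fourier J (\<lambda>y. a y + t * b y) S = fourier J a S + t * fourier J b S"
  unfolding fourier_def by (simp add: sum.distrib sum_distrib_left add_divide_distrib algebra_simps)

lemma fourier_insert:
  assumes "finite J" "j \<notin> J" "S \<subseteq> J"
  shows "fourier (insert j J) g S = fourier J (\<lambda>y. (g (y(j := 1)) + g (y(j := -1))) / 2) S"
proof -
  have p: "(\<Prod>i\<in>S. (y(j := t)) i) = (\<Prod>i\<in>S. y i)" for y t
    using assms(2,3) by (intro prod.cong) auto
  have "(\<Sum>y\<in>cube_on (insert j J). g y * (\<Prod>i\<in>S. y i))
      = 2 * (\<Sum>y\<in>cube_on J. (g (y(j := 1)) + g (y(j := -1))) / 2 * (\<Prod>i\<in>S. y i))"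
    unfolding sum_cube_on_insert[OF assms(1,2)] sum_distrib_left p
    by (intro sum.cong) (simp_all add: field_simps)
  then show ?thesis using assms by (simp add: fourier_def)
qed

lemma fourier_insert_insert:
  assumes "finite J" "j \<notin> J" "S \<subseteq> J"
  shows "fourier (insert j J) g (insert j S) = fourier J (\<lambda>y. (g (y(j := 1)) - g (y(j := -1))) / 2) S"
proof -
  have S: "finite S" "j \<notin> S" using assms finite_subset by auto
  have q: "(\<Prod>i\<in>S. (y(j := t)) i) = (\<Prod>i\<in>S. y i)" for y t
    using S(2) by (intro prod.cong) auto
  have p: "(\<Prod>i\<in>insert j S. (y(j := t)) i) = t * (\<Prod>i\<in>S. y i)" for y t
    using S q[of y t] by simp
  have "(\<Sum>y\<in>cube_on (insert j J). g y * (\<Prod>i\<in>insert j S. y i))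
      = 2 * (\<Sum>y\<in>cube_on J. (g (y(j := 1)) - g (y(j := -1))) / 2 * (\<Prod>i\<in>S. y i))"
    unfolding sum_cube_on_insert[OF assms(1,2)] sum_distrib_left p
    by (intro sum.cong) (simp_all add: field_simps)
  then show ?thesis using assms by (simp add: fourier_def)
qed

theorem parseval:
  assumes "finite J"
  shows "(\<Sum>S\<in>Pow J. (fourier J g S)^2) = (\<Sum>y\<in>cube_on J. (g y)^2) / 2 ^ card J"
  using assms
proof (induction J arbitrary: g rule: finite_induct)
  case empty
  then show ?case by (simp add: fourier_def cube_on_empty)
next
  case (insert j J)
  define g_plus where "g_plus y = (g (y(j := 1)) + g (y(j := -1))) / 2" for y
  define g_minus where "g_minus y = (g (y(j := 1)) - g (y(j := -1))) / 2" for y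
  have "(\<Sum>S\<in>Pow (insert j J). (fourier (insert j J) g S)^2)
      = (\<Sum>S\<in>Pow J. (fourier J g_plus S)^2 + (fourier J g_minus S)^2)"
    unfolding sum_Pow_insert[OF insert(1,2)] g_plus_def g_minus_def
    by (intro sum.cong) (auto simp: fourier_insert[OF insert(1,2)] fourier_insert_insert[OF insert(1,2)])
  also have "\<dots> = (\<Sum>y\<in>cube_on J. (g_plus y)^2 + (g_minus y)^2) / 2 ^ card J"
    by (simp add: sum.distrib insert.IH add_divide_distrib)
  also have "(\<Sum>y\<in>cube_on J. (g_plus y)^2 + (g_minus y)^2) = (\<Sum>y\<in>cube_on (insert j J). (g y)^2) / 2"
    unfolding sum_cube_on_insert[OF insert(1,2)] sum_divide_distrib
    by (intro sum.cong) (simp_all add: g_plus_def g_minus_def power2_eq_square field_simps)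
  finally show ?case using insert(1,2) by simp
qed

lemma abs_fourier_le_1:
  assumes "finite J" "\<And>y. y \<in> cube_on J \<Longrightarrow> \<bar>g y\<bar> \<le> 1"
  shows "\<bar>fourier J g S\<bar> \<le> 1"
proof -
  have "\<bar>\<Sum>y\<in>cube_on J. g y * (\<Prod>i\<in>S. y i)\<bar> \<le> (\<Sum>y\<in>cube_on J. 1)"
  proof (rule order_trans[OF sum_abs sum_mono])
    fix y assume y: "y \<in> cube_on J"
    then have "\<bar>y i\<bar> = 1" for i by (cases "i \<in> J") (auto simp: cube_on_def)
    then show "\<bar>g y * (\<Prod>i\<in>S. y i)\<bar> \<le> 1"
      using assms(2)[OF y] by (simp add: abs_mult abs_prod)
  qed
  then show ?thesis
    using assms(1) by (simp add: fourier_def card_cube_on divide_le_eq)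
qed

definition coord_avg :: "nat \<Rightarrow> ((nat \<Rightarrow> real) \<Rightarrow> real) \<Rightarrow> (nat \<Rightarrow> real) \<Rightarrow> real" where
  "coord_avg k f z = (f (z(k := 1)) + f (z(k := -1))) / 2"

definition coord_diff :: "nat \<Rightarrow> ((nat \<Rightarrow> real) \<Rightarrow> real) \<Rightarrow> (nat \<Rightarrow> real) \<Rightarrow> real" where
  "coord_diff k f z = (f (z(k := 1)) - f (z(k := -1))) / 2"

lemma restrict_fun_fun_upd:
  "k \<notin> V \<Longrightarrow> restrict_fun (\<lambda>z. f (z(k := t))) V x y = restrict_fun f V (x(k := t)) y"
  unfolding restrict_fun_def by (rule arg_cong[of _ _ f]) auto

lemma restrict_fun_coord_avg:
  "k \<notin> V \<Longrightarrow> restrict_fun (coord_avg k f) V x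
     = (\<lambda>y. (restrict_fun f V (x(k := 1)) y + restrict_fun f V (x(k := -1)) y) / 2)"
  by (simp add: restrict_fun_fun_upd[symmetric]) (simp add: restrict_fun_def coord_avg_def fun_eq_iff)

lemma restrict_fun_coord_diff:
  "k \<notin> V \<Longrightarrow> restrict_fun (coord_diff k f) V x
     = (\<lambda>y. (restrict_fun f V (x(k := 1)) y - restrict_fun f V (x(k := -1)) y) / 2)"
  by (simp add: restrict_fun_fun_upd[symmetric]) (simp add: restrict_fun_def coord_diff_def fun_eq_iff)

lemma restr_fourier_insert:
  assumes "finite V" "k \<notin> V" "S \<subseteq> V"
  shows "restr_fourier f (insert k V) x S = restr_fourier (coord_avg k f) V x S"
  unfolding restr_fourier_eq_fourier fourier_insert[OF assms] restrict_fun_insert_fun_upd[OF assms(2)]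
  by (simp add: restrict_fun_coord_avg[OF assms(2)])

lemma restr_fourier_insert_insert:
  assumes "finite V" "k \<notin> V" "S \<subseteq> V"
  shows "restr_fourier f (insert k V) x (insert k S) = restr_fourier (coord_diff k f) V x S"
  unfolding restr_fourier_eq_fourier fourier_insert_insert[OF assms] restrict_fun_insert_fun_upd[OF assms(2)]
  by (simp add: restrict_fun_coord_diff[OF assms(2)])

lemma restr_fourier_fun_upd:
  assumes "k \<notin> V" "t = 1 \<or> t = -1"
  shows "restr_fourier f V (x(k := t)) S
    = restr_fourier (coord_avg k f) V x S + t * restr_fourier (coord_diff k f) V x S"
proof -
  have "restrict_fun f V (x(k := t))
      = (\<lambda>y. restrict_fun (coord_avg k f) V x y + t * restrict_fun (coord_diff k f) V x y)"
    using assms by (auto simp: restrict_fun_coord_avg restrict_fun_coord_diff field_simps)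
  then show ?thesis
    by (simp add: restr_fourier_eq_fourier fourier_add_scaled[symmetric])
qed

lemma sum_restr_fourier_square:
  assumes "finite J" "V \<subseteq> J"
  shows "(\<Sum>x\<in>cube_on J. \<Sum>S\<in>Pow V. (restr_fourier g V x S)^2) = (\<Sum>x\<in>cube_on J. (g x)^2)"
proof -
  have V: "finite V" using assms finite_subset by blast
  have "(\<Sum>x\<in>cube_on J. \<Sum>S\<in>Pow V. (restr_fourier g V x S)^2)
      = (\<Sum>x\<in>cube_on J. \<Sum>y\<in>cube_on V. restrict_fun (\<lambda>z. (g z)^2) V x y) / 2 ^ card V"
    by (simp add: restr_fourier_eq_fourier parseval[OF V] sum_divide_distrib restrict_fun_def)
  also have "\<dots> = (\<Sum>x\<in>cube_on J. (g x)^2)"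
    by (simp add: sum_restrict_fun[OF assms(1) V assms(2)])
  finally show ?thesis .
qed

lemma boolean_fun_restrict_fun:
  assumes "is_boolean_fun n f" "x \<in> cube n" "y \<in> cube_on V" "V \<subseteq> {0..<n}"
  shows "restrict_fun f V x y = 1 \<or> restrict_fun f V x y = -1"
  using assms restriction_in_cube_on[OF assms(2,3,4)]
  unfolding is_boolean_fun_def restrict_fun_def by auto

lemma abs_restr_fourier_le_1:
  assumes "is_boolean_fun n f" "x \<in> cube n" "V \<subseteq> {0..<n}"
  shows "\<bar>restr_fourier f V x S\<bar> \<le> 1"
  unfolding restr_fourier_eq_fourier using assms finite_subset[OF assms(3)]
  by (intro abs_fourier_le_1) (auto dest: boolean_fun_restrict_fun[OF assms(1,2)])

lemma restr_fourier_coord_square_le_1: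
  assumes "is_boolean_fun n f" "x \<in> cube n" "V \<subseteq> {0..<n}" "k \<in> {0..<n} - V"
  shows "(restr_fourier (coord_avg k f) V x S)^2 + (restr_fourier (coord_diff k f) V x S)^2 \<le> 1"
proof -
  define u where "u = restr_fourier (coord_avg k f) V x S"
  define v where "v = restr_fourier (coord_diff k f) V x S"
  have "\<bar>u + t * v\<bar> \<le> 1" if "t = 1 \<or> t = -1" for t
  proof -
    have "x(k := t) \<in> cube n" using fun_upd_in_cube_on[OF assms(2) _ that] assms(4) by simp
    moreover have "k \<notin> V" using assms(4) by simp
    ultimately show ?thesis
      using abs_restr_fourier_le_1[OF assms(1) _ assms(3), of "x(k := t)" S]
      by (simp add: restr_fourier_fun_upd[OF _ that] u_def v_def)
  qed
  from this[of 1] this[of "-1"] have "(u + v)^2 \<le> 1" "(u - v)^2 \<le> 1"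
    by (simp_all add: abs_square_le_1)
  then show ?thesis
    unfolding u_def[symmetric] v_def[symmetric] by (simp add: power2_eq_square algebra_simps)
qed

lemma sum_restr_fourier_coord_square:
  assumes "is_boolean_fun n f" "V \<subseteq> {0..<n}" "k \<in> {0..<n} - V"
  shows "(\<Sum>x\<in>cube n. \<Sum>S\<in>Pow V.
           (restr_fourier (coord_avg k f) V x S)^2 + (restr_fourier (coord_diff k f) V x S)^2) = 2 ^ n"
proof -
  have V: "finite V" "k \<notin> V" "insert k V \<subseteq> {0..<n}" using assms finite_subset by auto
  have "(\<Sum>x\<in>cube n. \<Sum>S\<in>Pow V.
           (restr_fourier (coord_avg k f) V x S)^2 + (restr_fourier (coord_diff k f) V x S)^2)
      = (\<Sum>x\<in>cube n. \<Sum>S\<in>Pow (insert k V). (restr_fourier f (insert k V) x S)^2)"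
    unfolding sum_Pow_insert[OF V(1,2)]
    by (intro sum.cong) (auto simp: restr_fourier_insert[OF V(1,2)] restr_fourier_insert_insert[OF V(1,2)])
  also have "\<dots> = (\<Sum>x\<in>cube n. (f x)^2)"
    using V(3) by (intro sum_restr_fourier_square) auto
  also have "\<dots> = (\<Sum>x\<in>cube n. 1)"
    using assms(1) by (intro sum.cong) (auto simp: is_boolean_fun_def)
  finally show ?thesis by (simp add: card_cube_on)
qed

lemma sum_coord_diff_square:
  assumes "is_boolean_fun n f" "k < n"
  shows "(\<Sum>x\<in>cube n. (coord_diff k f x)^2) = 2 ^ n * influence n f k"
proof -
  define flips where "flips x = (if f x \<noteq> f (flip k x) then 1 else 0 :: real)" for x
  have "flips (x(k := 1)) + flips (x(k := -1)) = 2 * (coord_diff k f x)^2" if "x \<in> cube n" for x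
  proof -
    define a b where "a = f (x(k := 1))" and "b = f (x(k := -1))"
    have "f (x(k := t)) = 1 \<or> f (x(k := t)) = -1" if "t = 1 \<or> t = -1" for t
      using assms fun_upd_in_cube_on[OF \<open>x \<in> cube n\<close> _ that] by (auto simp: is_boolean_fun_def)
    then have "a = 1 \<or> a = -1" "b = 1 \<or> b = -1" by (auto simp: a_def b_def)
    moreover have "flips (x(k := 1)) = (if a \<noteq> b then 1 else 0)" "flips (x(k := -1)) = (if b \<noteq> a then 1 else 0)"
      by (simp_all add: flips_def flip_def a_def b_def)
    moreover have "coord_diff k f x = (a - b) / 2" by (simp add: coord_diff_def a_def b_def)
    ultimately show ?thesis by (auto simp: power2_eq_square)
  qed
  then have "2 * (\<Sum>x\<in>cube n. (coord_diff k f x)^2) = (\<Sum>x\<in>cube n. flips (x(k := 1)) + flips (x(k := -1)))"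
    by (simp add: sum_distrib_left)
  also have "\<dots> = 2 * (\<Sum>x\<in>cube n. flips x)"
    using assms(2) by (intro sum_cube_on_fun_upd_pair) auto
  also have "(\<Sum>x\<in>cube n. flips x) = real (card {x \<in> cube n. f x \<noteq> f (flip k x)})"
    by (simp add: flips_def sum.If_cases finite_cube_on Int_def)
  finally show ?thesis by (simp add: influence_def)
qed

lemma moment_insert_diff:
  assumes "V \<subseteq> {0..<n}" "k \<in> {0..<n} - V"
  shows "moment n (insert k V) e f - moment n V e f
    = - (\<Sum>x\<in>cube n. \<Sum>S\<in>Pow V. parallelogram_defect (2 * (1 + e))
           (restr_fourier (coord_avg k f) V x S) (restr_fourier (coord_diff k f) V x S)) / 2 ^ n"
proof -
  define p where "p = 2 * (1 + e)"
  define u where "u x S = restr_fourier (coord_avg k f) V x S" for x S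
  define v where "v x S = restr_fourier (coord_diff k f) V x S" for x S
  define A where "A = (\<Sum>x\<in>cube n. \<Sum>S\<in>Pow V. \<bar>u x S\<bar> powr p + \<bar>v x S\<bar> powr p)"
  define B where "B = (\<Sum>x\<in>cube n. \<Sum>S\<in>Pow V. \<bar>u x S + v x S\<bar> powr p + \<bar>u x S - v x S\<bar> powr p)"
  have V: "finite V" "k \<notin> V" "k \<in> {0..<n}" using assms finite_subset by auto
  have "moment n (insert k V) e f * 2 ^ n = A"
    unfolding moment_def sum_Pow_insert[OF V(1,2)] A_def
    by (auto simp: u_def v_def p_def restr_fourier_insert[OF V(1,2)] restr_fourier_insert_insert[OF V(1,2)]
        intro!: sum.cong)
  moreover have "2 * (moment n V e f * 2 ^ n) = B"
  proof -
    define K where "K x = (\<Sum>S\<in>Pow V. \<bar>restr_fourier f V x S\<bar> powr p)" for x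
    have "2 * (moment n V e f * 2 ^ n) = 2 * (\<Sum>x\<in>cube n. K x)"
      by (simp add: moment_def K_def p_def)
    also have "\<dots> = (\<Sum>x\<in>cube n. K (x(k := 1)) + K (x(k := -1)))"
      using V(3) by (intro sum_cube_on_fun_upd_pair[symmetric]) auto
    also have "\<dots> = B"
      by (simp add: B_def K_def u_def v_def restr_fourier_fun_upd[OF V(2)] sum.distrib)
    finally show ?thesis .
  qed
  moreover have "(\<Sum>x\<in>cube n. \<Sum>S\<in>Pow V. parallelogram_defect p (u x S) (v x S)) = B / 2 - A"
    by (simp add: A_def B_def parallelogram_defect_def sum_subtractf sum_divide_distrib diff_diff_eq)
  ultimately show ?thesis
    by (simp add: p_def u_def v_def field_simps)
qed

lemma sum_parallelogram_defect_le:
  assumes "is_boolean_fun n f" "V \<subseteq> {0..<n}" "k \<in> {0..<n} - V" "0 < e" "e < 1" "c > 0"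
  shows "(\<Sum>x\<in>cube n. \<Sum>S\<in>Pow V. parallelogram_defect (2 * (1 + e))
           (restr_fourier (coord_avg k f) V x S) (restr_fourier (coord_diff k f) V x S))
    \<le> 2 ^ n * (((1 + e) * (1 + 2*e) - 2 + (1 - e) * c powr (- e)) * influence n f k + e * c powr (1 - e))"
proof -
  define a where "a = (1 + e) * (1 + 2*e) - 2 + (1 - e) * c powr (- e)"
  define b where "b = e * c powr (1 - e)"
  define u where "u x S = restr_fourier (coord_avg k f) V x S" for x S
  define v where "v x S = restr_fourier (coord_diff k f) V x S" for x S
  have "(\<Sum>x\<in>cube n. \<Sum>S\<in>Pow V. parallelogram_defect (2 * (1 + e)) (u x S) (v x S))
      \<le> (\<Sum>x\<in>cube n. \<Sum>S\<in>Pow V. a * (v x S)^2 + b * ((u x S)^2 + (v x S)^2))"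
  proof (intro sum_mono)
    fix x S assume "x \<in> cube n"
    then have "(u x S)^2 + (v x S)^2 \<le> 1"
      unfolding u_def v_def by (rule restr_fourier_coord_square_le_1[OF assms(1) _ assms(2,3)])
    from parallelogram_defect_le[OF assms(4-6) this]
    show "parallelogram_defect (2 * (1 + e)) (u x S) (v x S) \<le> a * (v x S)^2 + b * ((u x S)^2 + (v x S)^2)"
      unfolding a_def b_def .
  qed
  also have "\<dots> = a * (\<Sum>x\<in>cube n. \<Sum>S\<in>Pow V. (v x S)^2) + b * (\<Sum>x\<in>cube n. \<Sum>S\<in>Pow V. (u x S)^2 + (v x S)^2)"
    unfolding sum_distrib_left by (simp only: sum.distrib)
  also have "(\<Sum>x\<in>cube n. \<Sum>S\<in>Pow V. (v x S)^2) = 2 ^ n * influence n f k"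
    using assms(2,3) unfolding v_def
    by (simp add: sum_restr_fourier_square finite_cube_on sum_coord_diff_square[OF assms(1)])
  also have "(\<Sum>x\<in>cube n. \<Sum>S\<in>Pow V. (u x S)^2 + (v x S)^2) = 2 ^ n"
    unfolding u_def v_def by (rule sum_restr_fourier_coord_square[OF assms(1-3)])
  finally show ?thesis by (simp add: a_def b_def u_def v_def algebra_simps)
qed

lemma sum_parallelogram_defect_eq_0:
  assumes "V \<subseteq> {0..<n}" "(\<Sum>x\<in>cube n. (coord_diff k f x)^2) = 0"
  shows "(\<Sum>x\<in>cube n. \<Sum>S\<in>Pow V. parallelogram_defect p
           (restr_fourier (coord_avg k f) V x S) (restr_fourier (coord_diff k f) V x S)) = 0"
proof -
  have "finite V" using assms(1) finite_subset by blast
  then have "(\<Sum>x\<in>cube n. \<Sum>S\<in>Pow V. (restr_fourier (coord_diff k f) V x S)^2) = 0"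
    using assms by (simp add: sum_restr_fourier_square)
  then have "(\<Sum>S\<in>Pow V. (restr_fourier (coord_diff k f) V x S)^2) = 0" if "x \<in> cube n" for x
    using that by (subst (asm) sum_nonneg_eq_0_iff) (auto simp: finite_cube_on intro: sum_nonneg)
  then have "restr_fourier (coord_diff k f) V x S = 0" if "x \<in> cube n" "S \<in> Pow V" for x S
    using that \<open>finite V\<close> by (simp add: sum_nonneg_eq_0_iff)
  then show ?thesis
    by (intro sum.neutral ballI) (simp add: parallelogram_defect_def)
qed

theorem lemma3p1:
  fixes n :: nat and f :: "(nat \<Rightarrow> real) \<Rightarrow> real"
    and V1 V2 :: "nat set" and k :: nat and \<epsilon> :: real
  assumes "is_boolean_fun n f"
    and "V1 \<subset> {0..<n}"
    and "k \<in> {0..<n} - V1"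
    and "V2 = insert k V1"
    and "0 < \<epsilon>" and "\<epsilon> < 1/2"
  shows "moment n V2 \<epsilon> f - moment n V1 \<epsilon> f \<ge>
    (if influence n f k = 0 then 0
     else - influence n f k *
            (3 * \<epsilon> + 2 * \<epsilon>^2 + (influence n f k / 4) powr (- \<epsilon>) - 1))"
proof -
  define I where "I = influence n f k"
  define D where "D = (\<Sum>x\<in>cube n. \<Sum>S\<in>Pow V1. parallelogram_defect (2 * (1 + \<epsilon>))
    (restr_fourier (coord_avg k f) V1 x S) (restr_fourier (coord_diff k f) V1 x S))"
  have V1: "V1 \<subseteq> {0..<n}" and e: "0 < \<epsilon>" "\<epsilon> < 1" using assms(2,5,6) by auto
  have diff: "moment n V2 \<epsilon> f - moment n V1 \<epsilon> f = - D / 2 ^ n"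
    unfolding assms(4) D_def by (rule moment_insert_diff[OF V1 assms(3)])
  show ?thesis
  proof (cases "I = 0")
    case True
    then have "D = 0"
      unfolding D_def using sum_coord_diff_square[OF assms(1)] assms(3)
      by (intro sum_parallelogram_defect_eq_0[OF V1]) (auto simp: I_def)
    then show ?thesis using diff True by (simp add: I_def)
  next
    case False
    then have I: "I > 0" by (simp add: I_def influence_def)
    have "D \<le> 2 ^ n * (((1 + \<epsilon>) * (1 + 2*\<epsilon>) - 2 + (1 - \<epsilon>) * I powr (- \<epsilon>)) * I + \<epsilon> * I powr (1 - \<epsilon>))"
      unfolding D_def I_def using I[unfolded I_def] by (rule sum_parallelogram_defect_le[OF assms(1) V1 assms(3) e])
    also have "\<dots> = 2 ^ n * (I * (3 * \<epsilon> + 2 * \<epsilon>^2 + I powr (- \<epsilon>) - 1))"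
      using powr_add[of I 1 "- \<epsilon>"] I by (simp add: power2_eq_square algebra_simps)
    also have "\<dots> \<le> 2 ^ n * (I * (3 * \<epsilon> + 2 * \<epsilon>^2 + (I / 4) powr (- \<epsilon>) - 1))"
      using I e powr_mono2'[of "- \<epsilon>" "I / 4" I] by (intro mult_left_mono) auto
    finally have "D / 2 ^ n \<le> I * (3 * \<epsilon> + 2 * \<epsilon>^2 + (I / 4) powr (- \<epsilon>) - 1)"
      by (simp add: pos_divide_le_eq mult.commute)
    then show ?thesis using diff False by (simp add: I_def)
  qed
qed

end
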